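(* Let $M\ge 2$ be an integer. Consider the $M-1$ identifiers $\mathbf{r}^{(k)}=(r^{(k)}_1,\dots,r^{(k)}_M)$, $k=0,1,\dots,M-2$, of the group whose anchor position is $1$: $r^{(k)}_1=0$, and $(r^{(k)}_2,\dots,r^{(k)}_M)$ is the cyclic right shift by $k$ positions of $(1,2,\dots,M-1)$ (so $\mathbf{r}^{(0)}=(0,1,2,\dots,M-1)$, $\mathbf{r}^{(1)}=(0,M-1,1,2,\dots,M-2)$, $\dots$, $\mathbf{r}^{(M-2)}=(0,2,3,\dots,M-1,1)$). Then the $(M-1)\times M$ integer matrix whose $k$-th row is the coefficient vector $\big(2^{\,r_{\max}-r^{(k)}_1},\dots,2^{\,r_{\max}-r^{(k)}_M}\big)$ with $r_{\max}=M-1$ has rank $M-1$ (over $\mathbb{Q}$).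
   Context: A batch of $M$ data packets $c_1,\dots,c_M$ is encoded as follows: an encoded packet is specified by an identifier $(r_1,\dots,r_M)$ of nonnegative integers; each packet $c_m$ is padded with $r_m$ zero bits at its head (and zeros at its tail so all have equal length), which in ordinary integer arithmetic amounts to forming $2^{r_{\max}-r_m}c_m$ with $r_{\max}=\max_m r_m$, and the padded packets are XORed. The coefficient vector of the encoded packet is $(2^{r_{\max}-r_1},\dots,2^{r_{\max}-r_M})$, and ranks of collections of encoded packets are ranks of the matrices formed by these coefficient vectors, computed in ordinary (rational) arithmetic. In the first-round construction, the identifiers are the bijections $\{1,\dots,M\}\to\{0,1,\dots,M-1\}$ arranged into $M$ groups: the group with anchor position $g$ consists of the $M-1$ identifiers with $r_g=0$ whose entries at the positions other than $g$, read in increasing order of position, form the cyclic right shifts by $k=0,1,\dots,M-2$ of $(1,2,\dots,M-1)$. *)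

theory Defs
  imports "Jordan_Normal_Form.DL_Rank"
begin

text \<open>Identifier entries (0-indexed): row k (0 \<le> k \<le> M-2), position j (0 \<le> j \<le> M-1).
  Position 0 is the anchor (value 0); positions 1..M-1 hold the cyclic right shift by k
  of the list (1,2,...,M-1).\<close>
definition ident :: "nat \<Rightarrow> nat \<Rightarrow> nat \<Rightarrow> nat" where
  "ident M k j = (if j = 0 then 0
     else nat ((int (j - 1) - int k) mod int (M - 1)) + 1)"

definition coeff_mat :: "nat \<Rightarrow> rat mat" where
  "coeff_mat M = mat (M - 1) M (\<lambda>(k, j). 2 ^ (M - 1 - ident M k j))"

end

theory Submission
  imports Defs
begin

text \<open>Dropping the anchor column leaves a circulant matrix whose rows are permutations of
  the powers \<open>2 ^ 0, \<dots>, 2 ^ (M - 2)\<close>, with the largest power on the diagonal. Since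
  \<open>2 ^ 0 + \<dots> + 2 ^ (M - 3) < 2 ^ (M - 2)\<close>, this square matrix is strictly diagonally
  dominant and hence nonsingular (Levy-Desplanques), so the coefficient matrix has full row rank.\<close>

lemma det_nonzero_if_strictly_diagonally_dominant:
  fixes B :: "'a :: linordered_field mat"
  assumes B: "B \<in> carrier_mat n n"
    and dominant: "\<And>k. k < n \<Longrightarrow> (\<Sum>j\<in>{..<n} - {k}. \<bar>B $$ (k, j)\<bar>) < \<bar>B $$ (k, k)\<bar>"
  shows "det B \<noteq> 0"
proof
  assume "det B = 0"
  then obtain v where v: "v \<in> carrier_vec n" "v \<noteq> 0\<^sub>v n" "B *\<^sub>v v = 0\<^sub>v n"
    using det_0_iff_vec_prod_zero_field[OF B] by auto
  have "n \<noteq> 0" using v(1,2) by auto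
  then have "Max ((\<lambda>j. \<bar>v $ j\<bar>) ` {..<n}) \<in> (\<lambda>j. \<bar>v $ j\<bar>) ` {..<n}"
    by (intro Max_in) auto
  then obtain k where k: "k < n" and k_max: "\<bar>v $ k\<bar> = Max ((\<lambda>j. \<bar>v $ j\<bar>) ` {..<n})"
    by auto
  have max: "\<bar>v $ j\<bar> \<le> \<bar>v $ k\<bar>" if "j < n" for j
    using that k_max by simp
  have "v $ k \<noteq> 0"
  proof
    assume "v $ k = 0"
    then have "v = 0\<^sub>v n" using v(1) max by (intro eq_vecI) fastforce+
    with v(2) show False ..
  qed
  have "(\<Sum>j<n. B $$ (k, j) * v $ j) = (B *\<^sub>v v) $ k"
    using B v(1) k by (simp add: scalar_prod_def atLeast0LessThan)
  also have "\<dots> = 0" using v(3) k by simp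
  finally have "B $$ (k, k) * v $ k = - (\<Sum>j\<in>{..<n} - {k}. B $$ (k, j) * v $ j)"
    using k by (simp add: sum.remove eq_neg_iff_add_eq_0)
  then have "\<bar>B $$ (k, k) * v $ k\<bar> = \<bar>\<Sum>j\<in>{..<n} - {k}. B $$ (k, j) * v $ j\<bar>"
    by (simp only: abs_minus_cancel)
  then have "\<bar>B $$ (k, k)\<bar> * \<bar>v $ k\<bar> = \<bar>\<Sum>j\<in>{..<n} - {k}. B $$ (k, j) * v $ j\<bar>"
    by (simp add: abs_mult)
  also have "\<dots> \<le> (\<Sum>j\<in>{..<n} - {k}. \<bar>B $$ (k, j)\<bar> * \<bar>v $ j\<bar>)"
    using sum_abs[of "\<lambda>j. B $$ (k, j) * v $ j"] by (simp add: abs_mult)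
  also have "\<dots> \<le> (\<Sum>j\<in>{..<n} - {k}. \<bar>B $$ (k, j)\<bar>) * \<bar>v $ k\<bar>"
    unfolding sum_distrib_right using max by (intro sum_mono mult_left_mono) auto
  also have "\<dots> < \<bar>B $$ (k, k)\<bar> * \<bar>v $ k\<bar>"
    using dominant[OF k] \<open>v $ k \<noteq> 0\<close> by simp
  finally show False by simp
qed

lemma (in vec_space) rank_le_nr:
  assumes A: "A \<in> carrier_mat n nc"
  shows "rank A \<le> n"
proof -
  have "set (cols A) \<subseteq> carrier_vec n" using A cols_dim by blast
  then have "subspace class_ring (span (set (cols A))) V"
    by (rule span_is_subspace)
  from subspace_dim[OF this fin_dim fin_dim_span_cols[OF A]]
  show ?thesis unfolding rank_def dim_is_n .
qed

lemma (in vec_space) rank_eq_nr_if_nonsingular_col_submatrix: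
  assumes A: "A \<in> carrier_mat n nc" and B: "B \<in> carrier_mat n n"
    and det: "det B \<noteq> 0" and cols: "set (cols B) \<subseteq> set (cols A)"
  shows "rank A = n"
proof -
  have "rank B = n" using det_rank_iff[OF B] det by simp
  moreover from this have "distinct (cols B)" using non_distinct_low_rank[OF B] by auto
  ultimately have "lin_indpt (set (cols B))" using full_rank_lin_indpt[OF B] by simp
  then have "card (set (cols B)) \<le> rank A" using rank_ge_card_indpt[OF A cols] by simp
  moreover have "card (set (cols B)) = n" using B \<open>distinct (cols B)\<close> by (simp add: distinct_card)
  ultimately show ?thesis using rank_le_nr[OF A] by simp
qed

text \<open>Row \<open>k\<close> is \<open>c\<close> cyclically shifted right by \<open>k\<close>: entry \<open>(k, j)\<close> is \<open>c ((j - k) mod n)\<close>,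
  written without natural-number subtraction below zero.\<close>
definition circulant_mat :: "nat \<Rightarrow> (nat \<Rightarrow> 'a) \<Rightarrow> 'a mat" where
  "circulant_mat n c = mat n n (\<lambda>(k, j). c ((j + (n - k)) mod n))"

lemma bij_betw_rotate_mod:
  fixes k n :: nat
  assumes "k < n"
  shows "bij_betw (\<lambda>j. (j + (n - k)) mod n) {..<n} {..<n}"
proof (rule bij_betwI[where g = "\<lambda>i. (i + k) mod n"])
  show "((j + (n - k)) mod n + k) mod n = j" if "j \<in> {..<n}" for j
  proof -
    have "((j + (n - k)) mod n + k) mod n = (j + (n - k) + k) mod n" by (simp only: mod_add_left_eq)
    also have "j + (n - k) + k = j + n" using assms by simp
    finally show ?thesis using that by simp
  qed
  show "((i + k) mod n + (n - k)) mod n = i" if "i \<in> {..<n}" for i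
  proof -
    have "((i + k) mod n + (n - k)) mod n = (i + k + (n - k)) mod n" by (simp only: mod_add_left_eq)
    also have "i + k + (n - k) = i + n" using assms by simp
    finally show ?thesis using that by simp
  qed
qed (use assms in auto)

lemma det_circulant_nonzero:
  fixes c :: "nat \<Rightarrow> 'a :: linordered_field"
  assumes dominant: "(\<Sum>i\<in>{1..<n}. \<bar>c i\<bar>) < \<bar>c 0\<bar>"
  shows "det (circulant_mat n c) \<noteq> 0"
proof (rule det_nonzero_if_strictly_diagonally_dominant)
  show "circulant_mat n c \<in> carrier_mat n n" by (simp add: circulant_mat_def)
  fix k assume k: "k < n"
  have "bij_betw (\<lambda>j. (j + (n - k)) mod n) ({..<n} - {k}) ({..<n} - {0})"
    using k by (intro bij_betw_DiffI bij_betw_rotate_mod) auto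
  then have "(\<Sum>j\<in>{..<n} - {k}. \<bar>c ((j + (n - k)) mod n)\<bar>) = (\<Sum>i\<in>{..<n} - {0}. \<bar>c i\<bar>)"
    by (rule sum.reindex_bij_betw)
  also have "{..<n} - {0} = {1..<n}" by auto
  finally show "(\<Sum>j\<in>{..<n} - {k}. \<bar>circulant_mat n c $$ (k, j)\<bar>) < \<bar>circulant_mat n c $$ (k, k)\<bar>"
    using k dominant by (simp add: circulant_mat_def)
qed

lemma sum_powers_of_two_less:
  "(\<Sum>i\<in>{1..<n}. (2 :: 'a :: linordered_field) ^ (n - 1 - i)) < 2 ^ (n - 1)"
proof -
  have "(\<Sum>i\<in>{1..<n}. (2 :: 'a) ^ (n - 1 - i)) = (\<Sum>i<n - 1. 2 ^ i)"
    by (rule sum.reindex_bij_witness[of _ "\<lambda>i. n - 1 - i" "\<lambda>i. n - 1 - i"]) auto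
  also have "\<dots> = 2 ^ (n - 1) - 1" by (simp add: geometric_sum)
  finally show ?thesis by simp
qed

lemma ident_Suc_eq_rotate:
  assumes "k < M - 1"
  shows "ident M k (Suc j) = (j + (M - 1 - k)) mod (M - 1) + 1"
proof -
  define n where "n = M - 1"
  have "int ((j + (n - k)) mod n) = (int j - int k + int n) mod int n"
    using assms by (simp add: n_def of_nat_mod of_nat_diff algebra_simps)
  also have "\<dots> = (int j - int k) mod int n" by (rule mod_add_self2)
  finally have "nat ((int j - int k) mod int n) = (j + (n - k)) mod n" by (metis nat_int)
  then show ?thesis unfolding ident_def n_def[symmetric] by simp
qed

theorem lemma1:
  fixes M :: nat
  assumes "M \<ge> 2"
  shows "vec_space.rank (M - 1) (coeff_mat M) = M - 1"
proof -
  define n where "n = M - 1"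
  define A where "A = coeff_mat M"
  define B :: "rat mat" where "B = circulant_mat n (\<lambda>i. 2 ^ (n - 1 - i))"
  have A: "A \<in> carrier_mat n M" by (simp add: A_def coeff_mat_def n_def)
  have B: "B \<in> carrier_mat n n" by (simp add: B_def circulant_mat_def)
  have "det B \<noteq> 0"
    unfolding B_def using sum_powers_of_two_less[of n] by (intro det_circulant_nonzero) simp
  moreover have "set (cols B) \<subseteq> set (cols A)"
  proof
    fix c assume "c \<in> set (cols B)"
    then obtain j where j: "j < n" and c: "c = col B j" using B by (auto simp: in_set_conv_nth)
    have "col B j = col A (Suc j)"
      using j A B by (intro eq_vecI)
        (auto simp: B_def A_def circulant_mat_def coeff_mat_def ident_Suc_eq_rotate n_def diff_diff_add)
    then show "c \<in> set (cols A)"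
      using A j c by (auto simp: in_set_conv_nth n_def intro!: exI[of _ "Suc j"])
  qed
  ultimately show ?thesis
    using vec_space.rank_eq_nr_if_nonsingular_col_submatrix[OF A B] by (simp add: A_def n_def)
qed

end
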